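(* Let $\alpha\in(0,1)$. Let $\hat C_\alpha(X_{n+1})$ be the full conformal prediction region and $\tilde C_\alpha(X_{n+1})$ the upper approximate full conformal prediction region built from approximate scores $\tilde S_{D^y}$ and bounds $\tau_1(y),\dots,\tau_{n+1}(y)$ as described in the context. Then $\hat C_\alpha(X_{n+1})\subseteq \tilde C_\alpha(X_{n+1})$. Consequently, if $(X_1,Y_1),\dots,(X_{n+1},Y_{n+1})$ are exchangeable and the predictor $\hat f_D$ is invariant to permutations of the data in $D$, then $$\mathbb P\big[Y_{n+1}\in\tilde C_\alpha(X_{n+1})\big]\ \ge\ \mathbb P\big[Y_{n+1}\in \hat C_\alpha(X_{n+1})\big]\ \ge\ 1-\alpha .$$
   Context: Let $\mathcal X\subset\mathbb R^d$, $\mathcal Y\subset\mathbb R$. $D=\{(X_1,Y_1),\dots,(X_n,Y_n)\}$ are random variables with values in $\mathcal X\times\mathcal Y$ and $(X_{n+1},Y_{n+1})$ is a further random pair of which only $X_{n+1}$ is observed. For $y\in\mathcal Y$ let $D^y=\{(X_1,Y_1),\dots,(X_n,Y_n),(X_{n+1},y)\}$ and let $\hat f_{D^y}:\mathcal X\to\mathcal Y$ be a predictor trained on $D^y$. Given a non-conformity function $s:\mathcal Y\times\mathcal Y\to\mathbb R_+$, the non-conformity scores are $S_{D^y}(X_i,Y_i)=s(Y_i,\hat f_{D^y}(X_i))$ for $1\le i\le n$ and $S_{D^y}(X_{n+1},y)=s(y,\hat f_{D^y}(X_{n+1}))$. The full conformal p-value is $\hat\pi_D(X_{n+1},y)=\frac{1+\sum_{i=1}^n\mathbb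 1\{S_{D^y}(X_i,Y_i)\ge S_{D^y}(X_{n+1},y)\}}{n+1}$ and the full conformal prediction region is $\hat C_\alpha(X_{n+1})=\{y\in\mathcal Y:\hat\pi_D(X_{n+1},y)>\alpha\}$. Approximation scheme: for every $y\in\mathcal Y$ let $\tilde S_{D^y}(X_i,Y_i)$ ($1\le i\le n$) and $\tilde S_{D^y}(X_{n+1},y)$ be real numbers (approximate scores) and $0\le\tau_i(y)<\infty$ ($1\le i\le n+1$) be such that $|S_{D^y}(X_i,Y_i)-\tilde S_{D^y}(X_i,Y_i)|\le\tau_i(y)$ for $1\le i\le n$ and $|S_{D^y}(X_{n+1},y)-\tilde S_{D^y}(X_{n+1},y)|\le\tau_{n+1}(y)$. The upper approximate p-value is $\tilde\pi_D(X_{n+1},y)=\frac{1+\sum_{i=1}^n\mathbb 1\{\tilde S_{D^y}(X_i,Y_i)+\tau_i(y)\ge\tilde S_{D^y}(X_{n+1},y)-\tau_{n+1}(y)\}}{n+1}$ and the upper approximate full conformal region is $\tilde C_\alpha(X_{n+1})=\{y\in\mathcal Y:\tilde\pi_D(X_{n+1},y)>\alpha\}$. *)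

theory Defs
  imports "HOL-Probability.Probability"
begin

text \<open>Data sets are lists of pairs (X_i, Y_i); list position i-1 holds the i-th pair.
  A predictor-training procedure is a map from a training list to a predictor.\<close>

definition augment :: "('a \<times> real) list \<Rightarrow> 'a \<Rightarrow> real \<Rightarrow> ('a \<times> real) list" where
  "augment D x y = D @ [(x, y)]"

definition conf_score ::
  "(('a \<times> real) list \<Rightarrow> 'a \<Rightarrow> real) \<Rightarrow> (real \<Rightarrow> real \<Rightarrow> real)
   \<Rightarrow> ('a \<times> real) list \<Rightarrow> 'a \<Rightarrow> real \<Rightarrow> nat \<Rightarrow> real" where
  "conf_score fit s D x y i =
     (let Dy = augment D x y in s (snd (Dy ! (i - 1))) (fit Dy (fst (Dy ! (i - 1)))))"

definition full_pvalue ::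
  "(('a \<times> real) list \<Rightarrow> 'a \<Rightarrow> real) \<Rightarrow> (real \<Rightarrow> real \<Rightarrow> real)
   \<Rightarrow> ('a \<times> real) list \<Rightarrow> 'a \<Rightarrow> real \<Rightarrow> real" where
  "full_pvalue fit s D x y =
     (1 + real (card {i \<in> {1..length D}.
                 conf_score fit s D x y i \<ge> conf_score fit s D x y (length D + 1)}))
     / (real (length D) + 1)"

definition full_region ::
  "real set \<Rightarrow> (('a \<times> real) list \<Rightarrow> 'a \<Rightarrow> real) \<Rightarrow> (real \<Rightarrow> real \<Rightarrow> real)
   \<Rightarrow> ('a \<times> real) list \<Rightarrow> 'a \<Rightarrow> real \<Rightarrow> real set" where
  "full_region Ys fit s D x \<alpha> = {y \<in> Ys. full_pvalue fit s D x y > \<alpha>}"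

definition approx_pvalue ::
  "nat \<Rightarrow> (real \<Rightarrow> nat \<Rightarrow> real) \<Rightarrow> (real \<Rightarrow> nat \<Rightarrow> real) \<Rightarrow> real \<Rightarrow> real" where
  "approx_pvalue n St tau y =
     (1 + real (card {i \<in> {1..n}. St y i + tau y i \<ge> St y (n + 1) - tau y (n + 1)}))
     / (real n + 1)"

definition approx_region ::
  "real set \<Rightarrow> nat \<Rightarrow> (real \<Rightarrow> nat \<Rightarrow> real) \<Rightarrow> (real \<Rightarrow> nat \<Rightarrow> real) \<Rightarrow> real \<Rightarrow> real set" where
  "approx_region Ys n St tau \<alpha> = {y \<in> Ys. approx_pvalue n St tau y > \<alpha>}"

definition full_cover_set ::
  "real set \<Rightarrow> (('a::euclidean_space \<times> real) list \<Rightarrow> 'a \<Rightarrow> real) \<Rightarrow> (real \<Rightarrow> real \<Rightarrow> real)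
   \<Rightarrow> nat \<Rightarrow> real \<Rightarrow> (nat \<Rightarrow> 'a \<times> real) set" where
  "full_cover_set Ys fit s n \<alpha> =
     {z \<in> space (PiM {1..n+1} (\<lambda>_. borel)).
        snd (z (n+1)) \<in> full_region Ys fit s (map z [1..<n+1]) (fst (z (n+1))) \<alpha>}"

end

theory Submission
  imports Defs
begin

text \<open>
  Inclusion of the regions: the approximate scores widened by their error bounds still rank
  every training point at least as high as the test point whenever the exact scores do,
  so the approximate p-value dominates the full one.

  Coverage: let S_1, ..., S_(n+1) be the scores of the full data set with the true response.
  Swapping the test point with the j-th point yields n+1 data vectors of the same law, and
  because the fit depends only on the multiset of the data, the test point of the j-th swap
  is covered iff more than \<alpha>(n+1) of the S_k are at least S_j. At most \<alpha>(n+1) indices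
  j fail this (the one with the least score among them is dominated by all of them), so
  averaging the n+1 equiprobable events gives coverage probability at least 1 - \<alpha>.
\<close>

lemma card_low_rank_le:
  fixes R :: "'i \<Rightarrow> 'b::linorder"
  assumes "finite I" "0 \<le> c"
  shows "real (card {j\<in>I. real (card {k\<in>I. R j \<le> R k}) \<le> c}) \<le> c"
proof -
  define F where "F = {j\<in>I. real (card {k\<in>I. R j \<le> R k}) \<le> c}"
  have fin: "finite F" using assms(1) by (simp add: F_def)
  have "real (card F) \<le> c"
  proof (cases "F = {}")
    case True
    then show ?thesis using assms(2) by simp
  next
    case False
    define j0 where "j0 = arg_min_on R F"
    have j0: "j0 \<in> F" "\<And>j. j \<in> F \<Longrightarrow> R j0 \<le> R j"
      unfolding j0_def using arg_min_if_finite(1)[OF fin False] arg_min_least[OF fin False] by auto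
    have "F \<subseteq> {k\<in>I. R j0 \<le> R k}" using j0(2) by (auto simp: F_def)
    then have "card F \<le> card {k\<in>I. R j0 \<le> R k}" using assms(1) by (intro card_mono) auto
    also have "real \<dots> \<le> c" using j0(1) by (simp add: F_def)
    finally show ?thesis by simp
  qed
  then show ?thesis by (simp only: F_def)
qed

lemma full_pvalue_le_approx_pvalue:
  assumes "length D = n"
    and "\<And>i. i \<in> {1..n+1} \<Longrightarrow> \<bar>conf_score fit s D x y i - St y i\<bar> \<le> tau y i"
  shows "full_pvalue fit s D x y \<le> approx_pvalue n St tau y"
proof -
  have "{i \<in> {1..n}. conf_score fit s D x y (n + 1) \<le> conf_score fit s D x y i}
      \<subseteq> {i \<in> {1..n}. St y (n + 1) - tau y (n + 1) \<le> St y i + tau y i}"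
  proof safe
    fix i assume i: "i \<in> {1..n}"
      and "conf_score fit s D x y (n + 1) \<le> conf_score fit s D x y i"
    moreover have "\<bar>conf_score fit s D x y i - St y i\<bar> \<le> tau y i" using i assms(2) by simp
    moreover have "\<bar>conf_score fit s D x y (n+1) - St y (n+1)\<bar> \<le> tau y (n+1)" using assms(2) by simp
    ultimately show "St y (n + 1) - tau y (n + 1) \<le> St y i + tau y i" by linarith
  qed
  then have "card {i \<in> {1..n}. conf_score fit s D x y (n + 1) \<le> conf_score fit s D x y i}
      \<le> card {i \<in> {1..n}. St y (n + 1) - tau y (n + 1) \<le> St y i + tau y i}"
    by (intro card_mono) auto
  then show ?thesis
    unfolding full_pvalue_def approx_pvalue_def assms(1) by (simp add: divide_right_mono)
qed

lemma full_region_subset_approx_region: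
  assumes "length D = n"
    and "\<And>y i. y \<in> Ys \<Longrightarrow> i \<in> {1..n+1} \<Longrightarrow> \<bar>conf_score fit s D x y i - St y i\<bar> \<le> tau y i"
  shows "full_region Ys fit s D x \<alpha> \<subseteq> approx_region Ys n St tau \<alpha>"
proof
  fix y assume "y \<in> full_region Ys fit s D x \<alpha>"
  then have y: "y \<in> Ys" "\<alpha> < full_pvalue fit s D x y" by (auto simp: full_region_def)
  have "full_pvalue fit s D x y \<le> approx_pvalue n St tau y"
    using assms(2)[OF y(1)] by (rule full_pvalue_le_approx_pvalue[OF assms(1)])
  with y show "y \<in> approx_region Ys n St tau \<alpha>" by (simp add: approx_region_def)
qed

lemma (in prob_space) prob_full_region_le_prob_approx_region:
  assumes "\<forall>\<omega>\<in>space M. length (D \<omega>) = n"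
    and "\<forall>\<omega>\<in>space M. \<forall>y\<in>Ys. \<forall>i\<in>{1..n+1}.
      \<bar>conf_score fit s (D \<omega>) (x \<omega>) y i - St \<omega> y i\<bar> \<le> tau \<omega> y i"
    and "{\<omega> \<in> space M. y \<omega> \<in> approx_region Ys n (St \<omega>) (tau \<omega>) \<alpha>} \<in> events"
  shows "prob {\<omega> \<in> space M. y \<omega> \<in> full_region Ys fit s (D \<omega>) (x \<omega>) \<alpha>}
    \<le> prob {\<omega> \<in> space M. y \<omega> \<in> approx_region Ys n (St \<omega>) (tau \<omega>) \<alpha>}"
proof (rule finite_measure_mono[OF _ assms(3)])
  have "full_region Ys fit s (D \<omega>) (x \<omega>) \<alpha> \<subseteq> approx_region Ys n (St \<omega>) (tau \<omega>) \<alpha>"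
    if "\<omega> \<in> space M" for \<omega>
    using assms(1,2) that by (intro full_region_subset_approx_region) auto
  then show "{\<omega> \<in> space M. y \<omega> \<in> full_region Ys fit s (D \<omega>) (x \<omega>) \<alpha>}
    \<subseteq> {\<omega> \<in> space M. y \<omega> \<in> approx_region Ys n (St \<omega>) (tau \<omega>) \<alpha>}"
    by blast
qed

lemma mset_map_permutes_upt:
  assumes "\<sigma> permutes {m..<n}"
  shows "mset (map (z \<circ> \<sigma>) [m..<n]) = mset (map z [m..<n])"
  using permutes_implies_image_mset_eq[OF assms, of "z \<circ> \<sigma>" z] by simp

lemma conf_score_permute:
  fixes z :: "nat \<Rightarrow> 'a \<times> real"
  assumes inv: "\<And>D1 D2. mset D1 = mset D2 \<Longrightarrow> fit D1 = fit D2"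
    and \<sigma>: "\<sigma> permutes {1..n+1}" and i: "i \<in> {1..n+1}"
  shows "conf_score fit s (map (z \<circ> \<sigma>) [1..<n+1]) (fst (z (\<sigma> (n+1)))) (snd (z (\<sigma> (n+1)))) i
       = conf_score fit s (map z [1..<n+1]) (fst (z (n+1))) (snd (z (n+1))) (\<sigma> i)"
proof -
  have augment: "augment (map z' [1..<n+1]) (fst (z' (n+1))) (snd (z' (n+1))) = map z' [1..<n+2]"
    for z' :: "nat \<Rightarrow> 'a \<times> real"
    by (simp add: augment_def)
  have nth: "map z' [1..<m] ! (k - 1) = z' k" if "1 \<le> k" "k < m"
    for z' :: "nat \<Rightarrow> 'a \<times> real" and k m
    using that by simp
  have "{1..n+1} = {1..<n+2}" by auto
  then have "mset (map (z \<circ> \<sigma>) [1..<n+2]) = mset (map z [1..<n+2])"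
    using \<sigma> by (simp only: mset_map_permutes_upt)
  then have fit_eq: "fit (map (z \<circ> \<sigma>) [1..<n+2]) = fit (map z [1..<n+2])" by (rule inv)
  have "\<sigma> i \<in> {1..n+1}" using permutes_in_image[OF \<sigma>] i by blast
  then have "map z [1..<n+2] ! (\<sigma> i - 1) = z (\<sigma> i)" by (intro nth) auto
  moreover have "map (z \<circ> \<sigma>) [1..<n+2] ! (i - 1) = z (\<sigma> i)"
    using i nth[of i "n+2" "z \<circ> \<sigma>"] by (simp only: o_apply) simp
  moreover have "augment (map (z \<circ> \<sigma>) [1..<n+1]) (fst (z (\<sigma> (n+1)))) (snd (z (\<sigma> (n+1))))
      = map (z \<circ> \<sigma>) [1..<n+2]"
    using augment[of "z \<circ> \<sigma>"] by (simp only: o_apply)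
  ultimately show ?thesis
    by (simp only: conf_score_def augment Let_def fit_eq)
qed

lemma card_filter_permute_Suc:
  fixes n :: nat
  assumes \<sigma>: "\<sigma> permutes {1..n+1}" and "P (\<sigma> (n+1))"
  shows "Suc (card {i\<in>{1..n}. P (\<sigma> i)}) = card {k\<in>{1..n+1}. P k}"
proof -
  let ?j = "\<sigma> (n+1)"
  have "\<sigma> ` {1..n} = \<sigma> ` ({1..n+1} - {n+1})" by (simp add: atLeastAtMostSuc_conv)
  also have "\<dots> = {1..n+1} - {?j}"
    using permutes_inj[OF \<sigma>] permutes_image[OF \<sigma>] by (simp add: image_set_diff)
  finally have image: "\<sigma> ` {1..n} = {1..n+1} - {?j}" .
  have "card {i\<in>{1..n}. P (\<sigma> i)} = card (\<sigma> ` {i\<in>{1..n}. P (\<sigma> i)})"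
    using permutes_inj[OF \<sigma>] by (simp add: card_image inj_on_subset)
  also have "\<sigma> ` {i\<in>{1..n}. P (\<sigma> i)} = {k\<in>{1..n+1} - {?j}. P k}"
    unfolding image[symmetric] by blast
  finally have "Suc (card {i\<in>{1..n}. P (\<sigma> i)}) = card (insert ?j {k\<in>{1..n+1} - {?j}. P k})"
    by simp
  also have "insert ?j {k\<in>{1..n+1} - {?j}. P k} = {k\<in>{1..n+1}. P k}"
    using permutes_in_image[OF \<sigma>, of "n+1"] assms(2) by auto
  finally show ?thesis .
qed

lemma full_pvalue_permute:
  fixes z :: "nat \<Rightarrow> 'a \<times> real" and s :: "real \<Rightarrow> real \<Rightarrow> real"
  assumes inv: "\<And>D1 D2. mset D1 = mset D2 \<Longrightarrow> fit D1 = fit D2"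
    and \<sigma>: "\<sigma> permutes {1..n+1}"
  defines "S \<equiv> conf_score fit s (map z [1..<n+1]) (fst (z (n+1))) (snd (z (n+1)))"
  shows "full_pvalue fit s (map (z \<circ> \<sigma>) [1..<n+1]) (fst (z (\<sigma> (n+1)))) (snd (z (\<sigma> (n+1))))
       = real (card {k\<in>{1..n+1}. S (\<sigma> (n+1)) \<le> S k}) / (real n + 1)"
proof -
  let ?j = "\<sigma> (n+1)"
  have count: "1 + card {i\<in>{1..n}. S ?j \<le> S (\<sigma> i)} = card {k\<in>{1..n+1}. S ?j \<le> S k}"
    using card_filter_permute_Suc[OF \<sigma>, of "\<lambda>k. S ?j \<le> S k"] by simp
  let ?D = "map (z \<circ> \<sigma>) [1..<n+1]"
  have score: "conf_score fit s ?D (fst (z ?j)) (snd (z ?j)) i = S (\<sigma> i)" if "i \<in> {1..n+1}" for i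
    using conf_score_permute[where z = z and s = s, OF inv \<sigma> that] unfolding S_def .
  have "{i\<in>{1..n}. conf_score fit s ?D (fst (z ?j)) (snd (z ?j)) (n + 1)
        \<le> conf_score fit s ?D (fst (z ?j)) (snd (z ?j)) i} = {i\<in>{1..n}. S ?j \<le> S (\<sigma> i)}"
    using score[of "n+1"] score by (intro Collect_cong conj_cong refl) simp_all
  moreover have "length ?D = n" by simp
  ultimately show ?thesis
    unfolding full_pvalue_def by (simp only: count[symmetric] of_nat_add of_nat_1)
qed

lemma restrict_mem_full_cover_set_iff:
  "(\<lambda>i\<in>{1..n+1}. w i) \<in> full_cover_set Ys fit s n \<alpha>
    \<longleftrightarrow> snd (w (n+1)) \<in> full_region Ys fit s (map w [1..<n+1]) (fst (w (n+1))) \<alpha>"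
proof -
  have "map (\<lambda>i\<in>{1..n+1}. w i) [1..<n+1] = map w [1..<n+1]" by (rule map_cong) auto
  moreover have "(\<lambda>i\<in>{1..n+1}. w i) (n+1) = w (n+1)" by simp
  moreover have "(\<lambda>i\<in>{1..n+1}. w i) \<in> space (PiM {1..n+1} (\<lambda>_. borel))" by (simp add: space_PiM)
  ultimately show ?thesis unfolding full_cover_set_def mem_Collect_eq by (simp only: simp_thms)
qed

lemma card_swaps_in_full_cover_set_ge:
  fixes z :: "nat \<Rightarrow> 'a::euclidean_space \<times> real"
  assumes inv: "\<And>D1 D2. mset D1 = mset D2 \<Longrightarrow> fit D1 = fit D2"
    and "0 \<le> \<alpha>" and Ys: "\<And>k. k \<in> {1..n+1} \<Longrightarrow> snd (z k) \<in> Ys"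
  shows "(real n + 1) * (1 - \<alpha>) \<le> real (card {j\<in>{1..n+1}.
           (\<lambda>i\<in>{1..n+1}. z (Transposition.transpose j (n+1) i)) \<in> full_cover_set Ys fit s n \<alpha>})"
proof -
  define S where "S = conf_score fit s (map z [1..<n+1]) (fst (z (n+1))) (snd (z (n+1)))"
  define I where "I = {1..n+1::nat}"
  define Low where "Low = {j\<in>I. real (card {k\<in>I. S j \<le> S k}) \<le> \<alpha> * (real n + 1)}"
  have "(\<lambda>i\<in>I. z (Transposition.transpose j (n+1) i)) \<in> full_cover_set Ys fit s n \<alpha> \<longleftrightarrow> j \<notin> Low"
    if j: "j \<in> I" for j
  proof -
    have "Transposition.transpose j (n+1) permutes I"
      using j unfolding I_def by (intro permutes_swap_id) auto
    from full_pvalue_permute[where z = z and s = s, OF inv this[unfolded I_def]]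
    have "full_pvalue fit s (map (z \<circ> Transposition.transpose j (n+1)) [1..<n+1]) (fst (z j)) (snd (z j))
        = real (card {k\<in>I. S j \<le> S k}) / (real n + 1)"
      by (simp add: S_def I_def)
    then show ?thesis
      using restrict_mem_full_cover_set_iff[of "z \<circ> Transposition.transpose j (n+1)"] Ys j
      by (simp add: full_region_def Low_def I_def pos_less_divide_eq not_le del: upt_Suc)
  qed
  then have "{j\<in>I. (\<lambda>i\<in>I. z (Transposition.transpose j (n+1) i)) \<in> full_cover_set Ys fit s n \<alpha>} = I - Low"
    by blast
  moreover have "real (card Low) \<le> \<alpha> * (real n + 1)"
    unfolding Low_def using assms(2) by (intro card_low_rank_le) (auto simp: I_def)
  moreover have "Low \<subseteq> I" "finite I" by (auto simp: Low_def I_def)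
  then have "card (I - Low) = card I - card Low" "card Low \<le> card I"
    by (simp_all add: card_Diff_subset finite_subset card_mono)
  ultimately show ?thesis by (simp add: I_def of_nat_diff algebra_simps)
qed

lemma (in prob_space) sum_prob_ge_pointwise_count:
  assumes "finite I" and events: "\<And>j. j \<in> I \<Longrightarrow> B j \<in> events"
    and count: "\<And>\<omega>. \<omega> \<in> space M \<Longrightarrow> c \<le> real (card {j\<in>I. \<omega> \<in> B j})"
  shows "c \<le> (\<Sum>j\<in>I. prob (B j))"
proof -
  have integrable: "integrable M (indicator (B j) :: 'a \<Rightarrow> real)" if "j \<in> I" for j
    using events[OF that] by (simp add: emeasure_eq_measure)
  have "c = expectation (\<lambda>_. c)" by (simp add: prob_space)
  also have "\<dots> \<le> expectation (\<lambda>\<omega>. \<Sum>j\<in>I. indicator (B j) \<omega>)"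
  proof (rule integral_mono)
    fix \<omega> assume "\<omega> \<in> space M"
    then show "c \<le> (\<Sum>j\<in>I. indicator (B j) \<omega>)"
      using count \<open>finite I\<close> by (simp add: indicator_def sum.If_cases Int_def)
  qed (use integrable in auto)
  also have "\<dots> = (\<Sum>j\<in>I. prob (B j))"
    using integrable events by (simp add: Bochner_Integration.integral_sum)
  finally show ?thesis .
qed

lemma measurable_restrict_permute:
  assumes "\<sigma> permutes I" and "\<And>i. i \<in> I \<Longrightarrow> V i \<in> M \<rightarrow>\<^sub>M N"
  shows "(\<lambda>\<omega>. \<lambda>i\<in>I. V (\<sigma> i) \<omega>) \<in> M \<rightarrow>\<^sub>M PiM I (\<lambda>_. N)"
proof (rule measurable_restrict)
  show "V (\<sigma> i) \<in> M \<rightarrow>\<^sub>M N" if "i \<in> I" for i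
    using that by (intro assms(2)) (simp add: permutes_in_image[OF assms(1)])
qed

lemma (in prob_space) prob_permute_vimage_eq:
  assumes \<sigma>: "\<sigma> permutes I" and V: "\<And>i. i \<in> I \<Longrightarrow> V i \<in> M \<rightarrow>\<^sub>M N"
    and exch: "distr M (PiM I (\<lambda>_. N)) (\<lambda>\<omega>. \<lambda>i\<in>I. V (\<sigma> i) \<omega>)
      = distr M (PiM I (\<lambda>_. N)) (\<lambda>\<omega>. \<lambda>i\<in>I. V i \<omega>)"
    and E: "E \<in> sets (PiM I (\<lambda>_. N))"
  shows "prob ((\<lambda>\<omega>. \<lambda>i\<in>I. V (\<sigma> i) \<omega>) -` E \<inter> space M)
    = prob ((\<lambda>\<omega>. \<lambda>i\<in>I. V i \<omega>) -` E \<inter> space M)"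
proof -
  have "prob ((\<lambda>\<omega>. \<lambda>i\<in>I. V (\<sigma> i) \<omega>) -` E \<inter> space M)
      = measure (distr M (PiM I (\<lambda>_. N)) (\<lambda>\<omega>. \<lambda>i\<in>I. V (\<sigma> i) \<omega>)) E"
    using measurable_restrict_permute[OF \<sigma> V] E by (simp add: measure_distr)
  also have "\<dots> = measure (distr M (PiM I (\<lambda>_. N)) (\<lambda>\<omega>. \<lambda>i\<in>I. V i \<omega>)) E"
    by (simp only: exch)
  also have "\<dots> = prob ((\<lambda>\<omega>. \<lambda>i\<in>I. V i \<omega>) -` E \<inter> space M)"
    using measurable_restrict[of I V] V E by (simp add: measure_distr)
  finally show ?thesis .
qed

lemma (in prob_space) full_conformal_coverage:
  fixes X :: "nat \<Rightarrow> 'a \<Rightarrow> 'x::euclidean_space" and Y :: "nat \<Rightarrow> 'a \<Rightarrow> real"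
  assumes meas: "\<forall>i\<in>{1..n+1}. X i \<in> borel_measurable M \<and> Y i \<in> borel_measurable M"
    and Ys: "\<forall>i\<in>{1..n+1}. \<forall>\<omega>\<in>space M. Y i \<omega> \<in> Ys"
    and exch: "\<forall>\<sigma>. \<sigma> permutes {1..n+1} \<longrightarrow>
      distr M (PiM {1..n+1} (\<lambda>_. borel)) (\<lambda>\<omega>. \<lambda>i\<in>{1..n+1}. (X (\<sigma> i) \<omega>, Y (\<sigma> i) \<omega>))
      = distr M (PiM {1..n+1} (\<lambda>_. borel)) (\<lambda>\<omega>. \<lambda>i\<in>{1..n+1}. (X i \<omega>, Y i \<omega>))"
    and inv: "\<forall>D1 D2. mset D1 = mset D2 \<longrightarrow> fit D1 = fit D2"
    and cover: "full_cover_set Ys fit s n \<alpha> \<in> sets (PiM {1..n+1} (\<lambda>_. borel))"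
    and "0 \<le> \<alpha>"
  shows "1 - \<alpha> \<le> prob {\<omega> \<in> space M.
    Y (n+1) \<omega> \<in> full_region Ys fit s (map (\<lambda>j. (X j \<omega>, Y j \<omega>)) [1..<n+1]) (X (n+1) \<omega>) \<alpha>}"
proof -
  define I where "I = {1..n+1::nat}"
  define z where "z = (\<lambda>\<omega> i. (X i \<omega>, Y i \<omega>))"
  define E where "E = full_cover_set Ys fit s n \<alpha>"
  define swap where "swap = (\<lambda>j. Transposition.transpose j (n+1))"
  define B where "B = (\<lambda>j. (\<lambda>\<omega>. \<lambda>i\<in>I. z \<omega> (swap j i)) -` E \<inter> space M)"
  have V: "(\<lambda>\<omega>. z \<omega> i) \<in> borel_measurable M" if "i \<in> I" for i
    using meas that by (simp add: z_def I_def borel_measurable_Pair)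
  have E_sets: "E \<in> sets (PiM I (\<lambda>_. borel))" using cover by (simp add: E_def I_def)
  have swap: "swap j permutes I" if "j \<in> I" for j
    using that unfolding swap_def I_def by (intro permutes_swap_id) auto
  have prob_B: "prob (B j) = prob ((\<lambda>\<omega>. \<lambda>i\<in>I. z \<omega> i) -` E \<inter> space M)" if "j \<in> I" for j
  proof -
    have "distr M (PiM I (\<lambda>_. borel)) (\<lambda>\<omega>. \<lambda>i\<in>I. z \<omega> (swap j i))
        = distr M (PiM I (\<lambda>_. borel)) (\<lambda>\<omega>. \<lambda>i\<in>I. z \<omega> i)"
      using exch swap[OF that] unfolding z_def I_def by blast
    from swap[OF that] V this E_sets show ?thesis
      unfolding B_def by (rule prob_permute_vimage_eq[of _ _ "\<lambda>i \<omega>. z \<omega> i"])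
  qed
  have "(real n + 1) * (1 - \<alpha>) \<le> (\<Sum>j\<in>I. prob (B j))"
  proof (rule sum_prob_ge_pointwise_count)
    show "B j \<in> events" if "j \<in> I" for j
      unfolding B_def
      using measurable_restrict_permute[where V = "\<lambda>i \<omega>. z \<omega> i", OF swap[OF that] V] E_sets
      by (rule measurable_sets)
    fix \<omega> assume \<omega>: "\<omega> \<in> space M"
    have "(real n + 1) * (1 - \<alpha>) \<le> real (card {j\<in>{1..n+1}.
        (\<lambda>i\<in>{1..n+1}. z \<omega> (Transposition.transpose j (n+1) i)) \<in> full_cover_set Ys fit s n \<alpha>})"
    proof (rule card_swaps_in_full_cover_set_ge)
      show "fit D1 = fit D2" if "mset D1 = mset D2" for D1 D2 using inv that by blast
      show "snd (z \<omega> k) \<in> Ys" if "k \<in> {1..n+1}" for k using Ys \<omega> that by (simp add: z_def)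
    qed (rule \<open>0 \<le> \<alpha>\<close>)
    then show "(real n + 1) * (1 - \<alpha>) \<le> real (card {j\<in>I. \<omega> \<in> B j})"
      using \<omega> by (simp add: B_def E_def I_def swap_def)
  qed (simp add: I_def)
  also have "\<dots> = (real n + 1) * prob ((\<lambda>\<omega>. \<lambda>i\<in>I. z \<omega> i) -` E \<inter> space M)"
    by (simp add: prob_B I_def)
  finally have "1 - \<alpha> \<le> prob ((\<lambda>\<omega>. \<lambda>i\<in>I. z \<omega> i) -` E \<inter> space M)" by simp
  also have "(\<lambda>\<omega>. \<lambda>i\<in>I. z \<omega> i) -` E \<inter> space M = {\<omega> \<in> space M.
      Y (n+1) \<omega> \<in> full_region Ys fit s (map (\<lambda>j. (X j \<omega>, Y j \<omega>)) [1..<n+1]) (X (n+1) \<omega>) \<alpha>}"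
    using restrict_mem_full_cover_set_iff[of "z _" n Ys fit s \<alpha>]
    by (auto simp: E_def I_def z_def simp del: upt_Suc)
  finally show ?thesis .
qed

theorem lemma5:
  fixes \<alpha> :: real and n :: nat and Ys :: "real set"
    and fit :: "('a::euclidean_space \<times> real) list \<Rightarrow> 'a \<Rightarrow> real"
    and s :: "real \<Rightarrow> real \<Rightarrow> real"
  assumes alpha: "0 < \<alpha>" "\<alpha> < 1"
    and s_nonneg: "\<And>u v. u \<in> Ys \<Longrightarrow> v \<in> Ys \<Longrightarrow> s u v \<ge> 0"
  shows
    "(\<forall>(D :: ('a \<times> real) list) x (St :: real \<Rightarrow> nat \<Rightarrow> real) tau.
        length D = n \<longrightarrow>
        (\<forall>y\<in>Ys. \<forall>i\<in>{1..n+1}. 0 \<le> tau y i \<and>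
            \<bar>conf_score fit s D x y i - St y i\<bar> \<le> tau y i) \<longrightarrow>
        full_region Ys fit s D x \<alpha> \<subseteq> approx_region Ys n St tau \<alpha>)
     \<and>
     (\<forall>(M :: 'w measure) (X :: nat \<Rightarrow> 'w \<Rightarrow> 'a) (Y :: nat \<Rightarrow> 'w \<Rightarrow> real)
        (St :: 'w \<Rightarrow> real \<Rightarrow> nat \<Rightarrow> real) tau.
        prob_space M \<longrightarrow>
        (\<forall>i\<in>{1..n+1}. X i \<in> borel_measurable M \<and> Y i \<in> borel_measurable M) \<longrightarrow>
        (\<forall>i\<in>{1..n+1}. \<forall>\<omega>\<in>space M. Y i \<omega> \<in> Ys) \<longrightarrow>
        \<comment> \<open>exchangeability of (X_1,Y_1),...,(X_{n+1},Y_{n+1})\<close>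
        (\<forall>\<sigma>. \<sigma> permutes {1..n+1} \<longrightarrow>
            distr M (PiM {1..n+1} (\<lambda>_. borel)) (\<lambda>\<omega>. \<lambda>i\<in>{1..n+1}. (X (\<sigma> i) \<omega>, Y (\<sigma> i) \<omega>))
          = distr M (PiM {1..n+1} (\<lambda>_. borel)) (\<lambda>\<omega>. \<lambda>i\<in>{1..n+1}. (X i \<omega>, Y i \<omega>))) \<longrightarrow>
        \<comment> \<open>predictor invariant to permutations of its training data\<close>
        (\<forall>D1 D2. mset D1 = mset D2 \<longrightarrow> fit D1 = fit D2) \<longrightarrow>
        \<comment> \<open>approximation scheme, for each realisation of the data\<close>
        (\<forall>\<omega>\<in>space M. \<forall>y\<in>Ys. \<forall>i\<in>{1..n+1}. 0 \<le> tau \<omega> y i \<and>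
            \<bar>conf_score fit s (map (\<lambda>j. (X j \<omega>, Y j \<omega>)) [1..<n+1]) (X (n+1) \<omega>) y i
               - St \<omega> y i\<bar> \<le> tau \<omega> y i) \<longrightarrow>
        \<comment> \<open>measurability of the events involved\<close>
        full_cover_set Ys fit s n \<alpha> \<in> sets (PiM {1..n+1} (\<lambda>_. borel)) \<longrightarrow>
        {\<omega> \<in> space M. Y (n+1) \<omega> \<in> approx_region Ys n (St \<omega>) (tau \<omega>) \<alpha>} \<in> sets M \<longrightarrow>
        measure M {\<omega> \<in> space M. Y (n+1) \<omega> \<in> approx_region Ys n (St \<omega>) (tau \<omega>) \<alpha>}
          \<ge> measure M {\<omega> \<in> space M.
               Y (n+1) \<omega> \<in> full_region Ys fit s (map (\<lambda>j. (X j \<omega>, Y j \<omega>)) [1..<n+1]) (X (n+1) \<omega>) \<alpha>}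
        \<and> measure M {\<omega> \<in> space M.
               Y (n+1) \<omega> \<in> full_region Ys fit s (map (\<lambda>j. (X j \<omega>, Y j \<omega>)) [1..<n+1]) (X (n+1) \<omega>) \<alpha>}
          \<ge> 1 - \<alpha>)"
  apply (intro conjI allI impI)
  subgoal for D x St tau
    by (rule full_region_subset_approx_region) auto
  subgoal premises prems for M X Y St tau
    by (rule prob_space.prob_full_region_le_prob_approx_region[OF prems(1) _ _ prems(8)])
      (use prems(6) in auto)
  subgoal premises prems for M X Y St tau
    using prob_space.full_conformal_coverage[OF prems(1-5) prems(7)] alpha by simp
  done

end
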